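(* Let $(X,d)$ be a metric space, $\mu$ a non-atomic Borel measure on $X$, $\beta>0$, and let $\Gamma^*\subset\Gamma^\mu$ be a family of paths closed under taking non-trivial subpaths that has the $\mu$-arc-chord property with exponent $\beta$. Then every Lipschitz-$\beta$ function $f:X\to\mathbb R$ (i.e. $|f(x)-f(y)|\le L\,d(x,y)^\beta$ for all $x,y$, for some $L$) is absolutely continuous over every path of $\Gamma^*$: for every $\gamma\in\Gamma^*$ with $\mu$-arc length parametrization $\gamma_h:[0,h]\to X$, the function $f\circ\gamma_h$ is absolutely continuous on $[0,h]$.
   Context: A path is a continuous map $\gamma:[a,b]\to X$; a subpath is a restriction to a subinterval, trivial if that interval is a point; $\mathrm{Im}(\gamma)=\gamma([a,b])$. $\mu$ non-atomic: $\mu(\{x\})=0$ for all $x$. $\Gamma^\mu$ is the set of all non-trivial injective paths $\gamma$ with $0<\mu(\mathrm{Im}(\tilde\gamma))<\infty$ for every non-trivial subpath $\tilde\gamma$. For $\gamma:[a,b]\to X$ in $\Gamma^\mu$, $h=\mu(\mathrm{Im}(\gamma))$, $\nu_\gamma(x)=\mu(\gamma([a,x]))$ is a bijection $[a,b]\to[0,h]$, and $\gamma_h=\gamma\circ\nu_\gamma^{-1}$. $\Gamma^*$ has the $\mu$-arc-chord property with exponent $\beta$ if there is $C_\mu>0$ with $\mathrm{diam}(\mathrm{Im}(\gamma))^\beta\le C_\mu\,\mu(\mathrm{Im}(\gamma))$ for all $\gamma\in\Gamma^*$. *)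

theory Defs
  imports "HOL-Analysis.Analysis"
begin

text \<open>A path is represented by a triple (g, a, b) with a \<le> b and g continuous on [a,b];
  only the values of g on [a,b] matter.\<close>

definition is_path :: "(real \<Rightarrow> 'a::topological_space) \<times> real \<times> real \<Rightarrow> bool" where
  "is_path p = (case p of (g, a, b) \<Rightarrow> a \<le> b \<and> continuous_on {a..b} g)"

definition path_image3 :: "(real \<Rightarrow> 'a) \<times> real \<times> real \<Rightarrow> 'a set" where
  "path_image3 p = (case p of (g, a, b) \<Rightarrow> g ` {a..b})"

definition nontrivial_path :: "(real \<Rightarrow> 'a::topological_space) \<times> real \<times> real \<Rightarrow> bool" where
  "nontrivial_path p = (is_path p \<and> fst (snd p) < snd (snd p))"

definition subpath3 :: "(real \<Rightarrow> 'a) \<times> real \<times> real \<Rightarrow> (real \<Rightarrow> 'a) \<times> real \<times> real \<Rightarrow> bool" where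
  "subpath3 q p = (case p of (g, a, b) \<Rightarrow> case q of (g', c, d) \<Rightarrow>
      a \<le> c \<and> c \<le> d \<and> d \<le> b \<and> (\<forall>t\<in>{c..d}. g' t = g t))"

definition non_atomic :: "'a measure \<Rightarrow> bool" where
  "non_atomic M = (\<forall>x. {x} \<in> sets M \<and> emeasure M {x} = 0)"

definition Gamma_mu :: "'a::topological_space measure \<Rightarrow> ((real \<Rightarrow> 'a) \<times> real \<times> real) set" where
  "Gamma_mu M = {p. nontrivial_path p \<and> inj_on (fst p) {fst (snd p)..snd (snd p)} \<and>
      (\<forall>q. subpath3 q p \<and> nontrivial_path q \<longrightarrow>
         0 < emeasure M (path_image3 q) \<and> emeasure M (path_image3 q) < \<infinity>)}"

text \<open>\<mu>-arc length function \<nu>_\<gamma>(x) = \<mu>(\<gamma>([a,x])) and parametrization \<gamma>_h = \<gamma> \<circ> \<nu>_\<gamma>^{-1}.\<close>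
definition mu_len :: "'a measure \<Rightarrow> (real \<Rightarrow> 'a) \<times> real \<times> real \<Rightarrow> real \<Rightarrow> real" where
  "mu_len M p x = (case p of (g, a, b) \<Rightarrow> measure M (g ` {a..x}))"

definition mu_param :: "'a measure \<Rightarrow> (real \<Rightarrow> 'a) \<times> real \<times> real \<Rightarrow> real \<Rightarrow> 'a" where
  "mu_param M p = (case p of (g, a, b) \<Rightarrow> g \<circ> inv_into {a..b} (mu_len M p))"

definition closed_under_subpaths :: "((real \<Rightarrow> 'a::topological_space) \<times> real \<times> real) set \<Rightarrow> bool" where
  "closed_under_subpaths G = (\<forall>p\<in>G. \<forall>q. subpath3 q p \<and> nontrivial_path q \<longrightarrow> q \<in> G)"

definition mu_arc_chord :: "'a::metric_space measure \<Rightarrow> real \<Rightarrow> ((real \<Rightarrow> 'a) \<times> real \<times> real) set \<Rightarrow> bool" where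
  "mu_arc_chord M \<beta> G = (\<exists>C>0. \<forall>p\<in>G.
      diameter (path_image3 p) powr \<beta> \<le> C * measure M (path_image3 p))"

definition lipschitz_beta :: "real \<Rightarrow> ('a::metric_space \<Rightarrow> real) \<Rightarrow> bool" where
  "lipschitz_beta \<beta> f = (\<exists>L. \<forall>x y. \<bar>f x - f y\<bar> \<le> L * dist x y powr \<beta>)"

definition abs_continuous_on :: "real set \<Rightarrow> (real \<Rightarrow> real) \<Rightarrow> bool" where
  "abs_continuous_on S g = (\<forall>\<epsilon>>0. \<exists>\<delta>>0. \<forall>(n::nat) (u::nat\<Rightarrow>real) v.
      (\<forall>i<n. u i \<le> v i \<and> {u i..v i} \<subseteq> S) \<and>
      (\<forall>i<n. \<forall>j<n. i \<noteq> j \<longrightarrow> v i \<le> u j \<or> v j \<le> u i) \<and>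
      (\<Sum>i<n. v i - u i) < \<delta> \<longrightarrow> (\<Sum>i<n. \<bar>g (v i) - g (u i)\<bar>) < \<epsilon>)"

end

theory Submission
  imports Defs
begin

text \<open>Along a path \<gamma> of \<Gamma>^\<mu> the \<mu>-arc length \<nu>_\<gamma> is continuous (continuity from above of \<mu>,
  since \<mu> has no atoms and \<gamma> is injective) and strictly increasing, so \<gamma>_h is well defined and
  \<gamma>_h([u,v]) is a subpath of \<mu>-measure v - u. The arc-chord property then bounds
  d(\<gamma>_h(u), \<gamma>_h(v))^\<beta> by C (v - u), so f \<circ> \<gamma>_h is Lipschitz with constant L C, hence
  absolutely continuous.\<close>

lemma lipschitz_imp_abs_continuous_on:
  fixes F :: "real \<Rightarrow> real"
  assumes "\<And>u v. u \<le> v \<Longrightarrow> {u..v} \<subseteq> S \<Longrightarrow> \<bar>F v - F u\<bar> \<le> K * (v - u)"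
  shows "abs_continuous_on S F"
  unfolding abs_continuous_on_def
proof (intro allI impI)
  fix e :: real assume e: "e > 0"
  show "\<exists>\<delta>>0. \<forall>n (u::nat\<Rightarrow>real) v.
      (\<forall>i<n. u i \<le> v i \<and> {u i..v i} \<subseteq> S) \<and>
      (\<forall>i<n. \<forall>j<n. i \<noteq> j \<longrightarrow> v i \<le> u j \<or> v j \<le> u i) \<and>
      (\<Sum>i<n. v i - u i) < \<delta> \<longrightarrow> (\<Sum>i<n. \<bar>F (v i) - F (u i)\<bar>) < e"
  proof (intro exI[of _ "e / (\<bar>K\<bar> + 1)"] conjI allI impI)
    show "e / (\<bar>K\<bar> + 1) > 0" using e by simp
    fix n and u v :: "nat \<Rightarrow> real"
    assume H: "(\<forall>i<n. u i \<le> v i \<and> {u i..v i} \<subseteq> S) \<and>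
      (\<forall>i<n. \<forall>j<n. i \<noteq> j \<longrightarrow> v i \<le> u j \<or> v j \<le> u i) \<and>
      (\<Sum>i<n. v i - u i) < e / (\<bar>K\<bar> + 1)"
    have "0 \<le> (\<Sum>i<n. v i - u i)" using H by (intro sum_nonneg) auto
    have "(\<Sum>i<n. \<bar>F (v i) - F (u i)\<bar>) \<le> (\<Sum>i<n. K * (v i - u i))"
      using H assms by (intro sum_mono) auto
    also have "\<dots> \<le> \<bar>K\<bar> * (\<Sum>i<n. v i - u i)"
      using \<open>0 \<le> (\<Sum>i<n. v i - u i)\<close> by (simp add: sum_distrib_left[symmetric] mult_right_mono)
    also have "\<dots> \<le> \<bar>K\<bar> * (e / (\<bar>K\<bar> + 1))"
      using H by (intro mult_left_mono) auto
    also have "\<dots> < e" using e by (simp add: field_simps)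
    finally show "(\<Sum>i<n. \<bar>F (v i) - F (u i)\<bar>) < e" .
  qed
qed

lemma abs_continuous_on_comp_holder:
  fixes f :: "'a::metric_space \<Rightarrow> real" and \<gamma> :: "real \<Rightarrow> 'a"
  assumes f: "\<And>x y. \<bar>f x - f y\<bar> \<le> L * dist x y powr \<beta>"
    and \<gamma>: "\<And>u v. u \<le> v \<Longrightarrow> {u..v} \<subseteq> S \<Longrightarrow> dist (\<gamma> u) (\<gamma> v) powr \<beta> \<le> C * (v - u)"
  shows "abs_continuous_on S (f \<circ> \<gamma>)"
proof (rule lipschitz_imp_abs_continuous_on[where K = "max L 0 * C"])
  fix u v assume uv: "u \<le> v" "{u..v} \<subseteq> S"
  have "\<bar>f (\<gamma> v) - f (\<gamma> u)\<bar> \<le> max L 0 * dist (\<gamma> v) (\<gamma> u) powr \<beta>"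
    by (rule order.trans[OF f]) (simp add: mult_right_mono)
  also have "\<dots> \<le> max L 0 * (C * (v - u))"
    using \<gamma>[OF uv] by (intro mult_left_mono) (simp_all add: dist_commute)
  finally show "\<bar>(f \<circ> \<gamma>) v - (f \<circ> \<gamma>) u\<bar> \<le> max L 0 * C * (v - u)"
    by (simp add: mult.assoc)
qed

lemma arc_chord_dist_powr_le:
  assumes "\<forall>q\<in>G. diameter (path_image3 q) powr \<beta> \<le> C * measure M (path_image3 q)"
    and "closed_under_subpaths G" and "(g, a, b) \<in> G" and "continuous_on {a..b} g"
    and "a \<le> s" "s \<le> t" "t \<le> b" and "\<beta> > 0" and "C \<ge> 0"
  shows "dist (g s) (g t) powr \<beta> \<le> C * measure M (g ` {s..t})"
proof (cases "s = t")
  case True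
  then show ?thesis using assms(8,9) by simp
next
  case False
  have "continuous_on {s..t} g" using assms(4-7) by (auto intro: continuous_on_subset)
  then have "subpath3 (g, s, t) (g, a, b) \<and> nontrivial_path (g, s, t)"
    using False assms(5-7) by (auto simp: subpath3_def nontrivial_path_def is_path_def)
  then have "(g, s, t) \<in> G" using assms(2,3) unfolding closed_under_subpaths_def by blast
  have "bounded (g ` {s..t})"
    using \<open>continuous_on {s..t} g\<close> by (intro compact_imp_bounded compact_continuous_image) auto
  then have "dist (g s) (g t) \<le> diameter (g ` {s..t})"
    using assms(6) by (intro diameter_bounded_bound) auto
  then have "dist (g s) (g t) powr \<beta> \<le> diameter (g ` {s..t}) powr \<beta>"
    using assms(8) by (intro powr_mono2) auto
  also have "\<dots> \<le> C * measure M (g ` {s..t})"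
    using assms(1) \<open>(g, s, t) \<in> G\<close> by (auto simp: path_image3_def)
  finally show ?thesis .
qed

lemma Inter_cball_inverse_Suc: "(\<Inter>n. cball x (1 / Suc n)) = {x}"
proof (intro equalityI subsetI)
  fix y assume "y \<in> (\<Inter>n. cball x (1 / Suc n))"
  then have y_close: "dist x y \<le> 1 / Suc n" for n by auto
  have "dist x y \<le> 0 + e" if e: "e > 0" for e
  proof -
    obtain n where "1 / Suc n < e" using nat_approx_posE[OF e] .
    with y_close[of n] show ?thesis by simp
  qed
  then have "dist x y \<le> 0" by (rule field_le_epsilon)
  then show "y \<in> {x}" by simp
qed auto

locale measured_arc =
  fixes M :: "'a::t2_space measure" and g :: "real \<Rightarrow> 'a" and a b :: real
  assumes sets_M: "sets M = sets borel"
    and non_atomic: "non_atomic M"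
    and a_less_b: "a < b"
    and continuous: "continuous_on {a..b} g"
    and injective: "inj_on g {a..b}"
    and finite_image: "emeasure M (g ` {a..b}) < \<infinity>"
    and positive_image: "\<And>s t. a \<le> s \<Longrightarrow> s < t \<Longrightarrow> t \<le> b \<Longrightarrow> 0 < emeasure M (g ` {s..t})"
begin

abbreviation \<nu> :: "real \<Rightarrow> real" where "\<nu> \<equiv> mu_len M (g, a, b)"

lemma mu_len_eq: "\<nu> x = measure M (g ` {a..x})"
  by (simp add: mu_len_def)

lemma measure_singleton: "measure M {z} = 0"
  using non_atomic by (simp add: non_atomic_def measure_def)

lemma fmeasurable_image_compact:
  assumes "compact K" "K \<subseteq> {a..b}"
  shows "g ` K \<in> fmeasurable M"
proof (rule fmeasurableI)
  have "compact (g ` K)"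
    using assms continuous by (blast intro: compact_continuous_image continuous_on_subset)
  then show "g ` K \<in> sets M" using sets_M by (simp add: compact_imp_closed)
  have "emeasure M (g ` K) \<le> emeasure M (g ` {a..b})"
  proof (rule emeasure_mono)
    have "compact (g ` {a..b})" using continuous by (intro compact_continuous_image) auto
    then show "g ` {a..b} \<in> sets M" using sets_M by (simp add: compact_imp_closed)
  qed (use assms in auto)
  with finite_image show "emeasure M (g ` K) < \<infinity>" by simp
qed

lemma fmeasurable_image_interval: "a \<le> s \<Longrightarrow> t \<le> b \<Longrightarrow> g ` {s..t} \<in> fmeasurable M"
  by (rule fmeasurable_image_compact) auto

lemma mu_len_add:
  assumes "a \<le> s" "s \<le> t" "t \<le> b"
  shows "\<nu> t = \<nu> s + measure M (g ` {s..t})"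
proof -
  have "g ` {a..t} = g ` {a..s} \<union> g ` {s..t}"
    using assms by (simp add: image_Un[symmetric] ivl_disj_un_two_touch)
  moreover have "g ` {a..s} \<inter> g ` {s..t} = {g s}"
    using assms injective by (auto simp: inj_on_eq_iff)
  ultimately show ?thesis
    using measure_Un3[OF fmeasurable_image_interval fmeasurable_image_interval, of a s s t] assms
    by (simp add: mu_len_eq measure_singleton)
qed

lemma mu_len_start: "\<nu> a = 0"
  by (simp add: mu_len_eq measure_singleton)

lemma mu_len_strict_mono:
  assumes "a \<le> s" "s < t" "t \<le> b"
  shows "\<nu> s < \<nu> t"
proof -
  have "0 < measure M (g ` {s..t})"
    using positive_image[OF assms] fmeasurable_image_interval[of s t] assms
    by (simp add: emeasure_eq_measure2)
  then show ?thesis using mu_len_add[of s t] assms by simp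
qed

lemma measure_image_shrinking_cball:
  assumes "x \<in> {a..b}"
  shows "(\<lambda>n. measure M (g ` ({a..b} \<inter> cball x (1 / Suc n)))) \<longlonglongrightarrow> 0"
proof -
  define A where "A n = g ` ({a..b} \<inter> cball x (1 / Suc n))" for n
  have A_fm: "A n \<in> fmeasurable M" for n
    unfolding A_def by (rule fmeasurable_image_compact) (auto intro: compact_Int_closed)
  have "decseq A"
    unfolding A_def by (intro decseq_SucI image_mono Int_mono order_refl subset_cball)
      (simp add: frac_le)
  have "(\<Inter>n. A n) = g ` (\<Inter>n. {a..b} \<inter> cball x (1 / Suc n))"
    unfolding A_def by (rule image_INT[OF injective, symmetric]) auto
  also have "\<dots> = {g x}" using assms Inter_cball_inverse_Suc[of x] by blast
  finally have "(\<Inter>n. A n) = {g x}" .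
  then have "measure M (\<Inter>n. A n) = 0" by (simp add: measure_singleton)
  moreover have "(\<lambda>n. measure M (A n)) \<longlonglongrightarrow> measure M (\<Inter>n. A n)"
    using A_fm \<open>decseq A\<close> by (intro Lim_measure_decseq) (auto simp: fmeasurableD emeasure_eq_measure2)
  ultimately show ?thesis by (simp only: A_def)
qed

lemma continuous_on_mu_len: "continuous_on {a..b} \<nu>"
  unfolding continuous_on_iff
proof (intro ballI allI impI)
  fix x e :: real assume x: "x \<in> {a..b}" and e: "e > 0"
  obtain n where n: "measure M (g ` ({a..b} \<inter> cball x (1 / Suc n))) < e"
    using order_tendstoD(2)[OF measure_image_shrinking_cball[OF x] e]
    by (auto simp: eventually_sequentially)
  show "\<exists>d>0. \<forall>y\<in>{a..b}. dist y x < d \<longrightarrow> dist (\<nu> y) (\<nu> x) < e"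
  proof (intro exI[of _ "1 / Suc n"] conjI ballI impI)
    fix y assume y: "y \<in> {a..b}" and "dist y x < 1 / Suc n"
    then have sub: "{min x y..max x y} \<subseteq> {a..b} \<inter> cball x (1 / Suc n)"
      using x by (auto simp: dist_real_def)
    have "dist (\<nu> y) (\<nu> x) = measure M (g ` {min x y..max x y})"
    proof (cases "x \<le> y")
      case True
      then show ?thesis using mu_len_add[of x y] x y by (simp add: dist_real_def)
    next
      case False
      then show ?thesis using mu_len_add[of y x] x y by (simp add: dist_real_def)
    qed
    also have "\<dots> \<le> measure M (g ` ({a..b} \<inter> cball x (1 / Suc n)))"
      using sub x y by (intro measure_mono_fmeasurable image_mono fmeasurable_image_compact
          fmeasurableD[OF fmeasurable_image_interval]) (auto intro: compact_Int_closed)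
    finally show "dist (\<nu> y) (\<nu> x) < e" using n by simp
  qed simp
qed

lemma mu_len_inverse:
  assumes "0 \<le> u" "u \<le> \<nu> b"
  shows "inv_into {a..b} \<nu> u \<in> {a..b}" and "\<nu> (inv_into {a..b} \<nu> u) = u"
proof -
  have "u \<in> \<nu> ` {a..b}"
    using IVT'[of \<nu> a u b] continuous_on_mu_len mu_len_start assms a_less_b by force
  then show "inv_into {a..b} \<nu> u \<in> {a..b}" "\<nu> (inv_into {a..b} \<nu> u) = u"
    using inv_into_into[of u \<nu> "{a..b}"] f_inv_into_f[of u \<nu> "{a..b}"] by blast+
qed

lemma mu_param_segment:
  assumes "0 \<le> u" "u \<le> v" "v \<le> \<nu> b"
  obtains s t where "a \<le> s" "s \<le> t" "t \<le> b"
    and "mu_param M (g, a, b) u = g s" "mu_param M (g, a, b) v = g t"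
    and "measure M (g ` {s..t}) = v - u"
proof
  let ?s = "inv_into {a..b} \<nu> u" and ?t = "inv_into {a..b} \<nu> v"
  show s: "a \<le> ?s" and t: "?t \<le> b" using mu_len_inverse assms by auto
  show "?s \<le> ?t"
    using mu_len_strict_mono[of ?t ?s] mu_len_inverse[of u] mu_len_inverse[of v] assms by force
  then show "measure M (g ` {?s..?t}) = v - u"
    using mu_len_add[of ?s ?t] mu_len_inverse[of u] mu_len_inverse[of v] s t assms by simp
qed (simp_all add: mu_param_def)

end

lemma mu_param_dist_powr_le:
  fixes M :: "'a::metric_space measure"
  assumes "measured_arc M g a b"
    and "\<forall>q\<in>G. diameter (path_image3 q) powr \<beta> \<le> C * measure M (path_image3 q)"
    and "closed_under_subpaths G" and "(g, a, b) \<in> G" and "\<beta> > 0" and "C \<ge> 0"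
    and "0 \<le> u" "u \<le> v" "v \<le> mu_len M (g, a, b) b"
  shows "dist (mu_param M (g, a, b) u) (mu_param M (g, a, b) v) powr \<beta> \<le> C * (v - u)"
proof -
  interpret measured_arc M g a b by fact
  obtain s t where st: "a \<le> s" "s \<le> t" "t \<le> b"
    and "mu_param M (g, a, b) u = g s" "mu_param M (g, a, b) v = g t"
    and "measure M (g ` {s..t}) = v - u"
    using mu_param_segment[OF assms(7-9)] .
  with arc_chord_dist_powr_le[OF assms(2-4) continuous st assms(5,6)] show ?thesis by simp
qed

lemma Gamma_mu_measured_arc:
  assumes "sets M = sets borel" "non_atomic M" "(g, a, b) \<in> Gamma_mu M"
  shows "measured_arc M g a b"
proof -
  have arc: "a < b" "continuous_on {a..b} g" "inj_on g {a..b}"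
    and sub: "\<And>q. subpath3 q (g, a, b) \<Longrightarrow> nontrivial_path q \<Longrightarrow>
      0 < emeasure M (path_image3 q) \<and> emeasure M (path_image3 q) < \<infinity>"
    using assms(3) by (auto simp: Gamma_mu_def nontrivial_path_def is_path_def)
  have "0 < emeasure M (g ` {s..t}) \<and> emeasure M (g ` {s..t}) < \<infinity>"
    if "a \<le> s" "s < t" "t \<le> b" for s t
    using sub[of "(g, s, t)"] that continuous_on_subset[OF arc(2), of "{s..t}"]
    by (simp add: subpath3_def nontrivial_path_def is_path_def path_image3_def)
  with arc assms(1,2) show ?thesis
    unfolding measured_arc_def by (auto simp: less_top)
qed

theorem lemma5p2:
  fixes M :: "'a::metric_space measure" and \<beta> :: real
    and G :: "((real \<Rightarrow> 'a) \<times> real \<times> real) set" and f :: "'a \<Rightarrow> real"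
  assumes "sets M = sets borel"
    and "non_atomic M"
    and "\<beta> > 0"
    and "G \<subseteq> Gamma_mu M"
    and "closed_under_subpaths G"
    and "mu_arc_chord M \<beta> G"
    and "lipschitz_beta \<beta> f"
    and "p \<in> G"
  shows "abs_continuous_on {0..measure M (path_image3 p)} (f \<circ> mu_param M p)"
proof -
  obtain g a b where p: "p = (g, a, b)" by (metis prod_cases3)
  interpret measured_arc M g a b
    using Gamma_mu_measured_arc assms(1,2,4,8) p by blast
  obtain C where C_nonneg: "C \<ge> 0"
    and C: "\<forall>q\<in>G. diameter (path_image3 q) powr \<beta> \<le> C * measure M (path_image3 q)"
    using assms(6) by (auto simp: mu_arc_chord_def less_eq_real_def)
  obtain L where L: "\<And>x y. \<bar>f x - f y\<bar> \<le> L * dist x y powr \<beta>"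
    using assms(7) by (auto simp: lipschitz_beta_def)
  have h: "measure M (path_image3 (g, a, b)) = \<nu> b" by (simp add: path_image3_def mu_len_eq)
  show ?thesis unfolding p h
  proof (rule abs_continuous_on_comp_holder[OF L])
    fix u v assume "u \<le> v" "{u..v} \<subseteq> {0..\<nu> b}"
    then show "dist (mu_param M (g, a, b) u) (mu_param M (g, a, b) v) powr \<beta> \<le> C * (v - u)"
      using mu_param_dist_powr_le[OF measured_arc_axioms C assms(5) assms(8)[unfolded p] assms(3) C_nonneg] by auto
  qed
qed

end
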